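(* Let $b>0$, $L\in\mathbb{R}$, and let $f:[L,\infty)\to\mathbb{R}$ be twice differentiable and a tempered distribution on $[L,\infty)$ (i.e., $\int_L^\infty|f(x)s(x)|dx<\infty$ for all $s\in S(\mathbb{R})$). Let $\mu$ be a probability measure on $[L,\infty)$ such that $\int_L^\infty |f(q)|e^{(L-q)/b}d\mu(q)<\infty$. For $w:(-\infty,L]\to\mathbb{R}$ let $\tilde f[w]:\mathbb{R}\to\mathbb{R}$ be $\tilde f[w](x)=f(x)$ for $x\ge L$ and $\tilde f[w](x)=w(x)$ for $x<L$. Let $h:(-\infty,L]\to\mathbb{R}$ be twice continuously differentiable with $h,h',h''$ each bounded in absolute value by a polynomial on $(-\infty,L]$, and with $h(L)=f(L)$, $h'(L)=f'(L)$, $h''(L)=f''(L)$. Let $g=\tilde f[h]-b^2\tilde f[h]''$ and $$\alpha=\int_{-\infty}^{\infty}\int_{[L,\infty)}\big(g(x)-f(q)\big)^2\frac{1}{2b}e^{-|x-q|/b}\,d\mu(q)\,dx .$$ Then there exists a sequence of polynomials $(p_K)_{K\ge1}$ on $(-\infty,L]$ with $p_K(L)=f(L)$, $p_K'(L)=f'(L)$, $p_K''(L)=f''(L)$, such that the estimators $g_K=\tilde f[p_K]-b^2\tilde f[p_K]''$ satisfy $$\lim_{K\to\infty}\int_{-\infty}^{\infty}\int_{[L,\infty)}\big(g_K(x)-f(q)\big)^2\frac{1}{2b}e^{-|x-q|/b}\,d\mu(q)\,dx=\alpha .$$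
   Context: The Schwartz space $S(\mathbb{R})$ is the set of $C^\infty$ functions $s:\mathbb{R}\to\mathbb{C}$ with $\sup_x|x^m s^{(n)}(x)|<\infty$ for all integers $m,n\ge0$. Derivatives of $\tilde f[w]$ at $x=L$ are well defined because the values and first two derivatives of $f$ and $w$ match at $L$; the value at the single point $L$ does not affect the integrals. *)

theory Defs
  imports "HOL-Analysis.Analysis" "HOL-Probability.Probability"
    "HOL-Computational_Algebra.Polynomial"
begin

definition schwartz :: "(real \<Rightarrow> complex) \<Rightarrow> bool" where
  "schwartz s \<longleftrightarrow> (\<exists>D :: nat \<Rightarrow> real \<Rightarrow> complex.
      D 0 = s \<and>
      (\<forall>n x. (D n has_vector_derivative D (Suc n) x) (at x)) \<and>
      (\<forall>m n. \<exists>C. \<forall>x. norm (complex_of_real (x ^ m) * D n x) \<le> C))"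

definition poly_bounded_on :: "real set \<Rightarrow> (real \<Rightarrow> real) \<Rightarrow> bool" where
  "poly_bounded_on A u \<longleftrightarrow> (\<exists>P :: real poly. \<forall>x\<in>A. \<bar>u x\<bar> \<le> poly P x)"

text \<open>The loss functional
  int_R int_[L,inf) (g x - f q)^2 (1/(2b)) exp(-|x-q|/b) dmu(q) dx,
  as an extended nonnegative real (integrand is nonnegative).\<close>
definition kernel_loss ::
  "real measure \<Rightarrow> real \<Rightarrow> real \<Rightarrow> (real \<Rightarrow> real) \<Rightarrow> (real \<Rightarrow> real) \<Rightarrow> ennreal" where
  "kernel_loss \<mu> L b f g =
     (\<integral>\<^sup>+ x. (\<integral>\<^sup>+ q. ennreal ((g x - f q)^2 * (1 / (2*b)) * exp (- \<bar>x - q\<bar> / b))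
                       * indicator {L..} q \<partial>\<mu>) \<partial>lborel)"

end

(*
  On [L, infinity) all the estimators coincide, so only x < L matters.  There the kernel,
  integrated against the probability mu over [L, infinity), is at most exp ((x - L) / b) / (2 b).
  Hence if the estimators g and g' differ by at most eps * exp ((L - x) / (4 b)) on
  (-infinity, L), Young's inequality gives  loss g \<le> (1 + eps) loss g' + 2 eps  and
  symmetrically, so losses converge in [0, infinity] as eps \<rightarrow> 0.  This never needs the
  losses to be finite.

  Polynomials p_K with g_K - g of that size exist: h'' is continuous and polynomially
  bounded, so it can be approximated by polynomials uniformly with respect to the weight
  exp (c (L - x)), c = 1 / (4 b).  After the substitution s = exp (x - L) this is the
  Weierstrass theorem on [0, 1], followed by Taylor approximation of the exponentials
  exp (a (x - L)) that the monomials s^i become.  Integrating the approximant of h'' twice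
  from L, with the prescribed values at L, keeps the weighted error up to a factor 1 / c
  per integration.
*)

theory Submission
  imports Defs "HOL-Real_Asymp.Real_Asymp"
begin

section \<open>Weighted polynomial approximation on a half-line\<close>

definition weighted_approximable :: "real \<Rightarrow> real \<Rightarrow> (real \<Rightarrow> real) \<Rightarrow> bool" where
  "weighted_approximable c L \<phi> \<longleftrightarrow>
     (\<forall>\<delta>>0. \<exists>P :: real poly. \<forall>x\<le>L. \<bar>\<phi> x - poly P x\<bar> \<le> \<delta> * exp (c * (L - x)))"

lemma weighted_approximable_poly: "weighted_approximable c L (poly P)"
  unfolding weighted_approximable_def by (auto intro!: exI[of _ P])

lemma weighted_approximable_add:
  assumes "weighted_approximable c L \<phi>" "weighted_approximable c L \<psi>"
  shows "weighted_approximable c L (\<lambda>x. \<phi> x + \<psi> x)"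
  unfolding weighted_approximable_def
proof (intro allI impI)
  fix \<delta> :: real
  assume "\<delta> > 0"
  then obtain P Q where
    P: "\<forall>x\<le>L. \<bar>\<phi> x - poly P x\<bar> \<le> \<delta>/2 * exp (c * (L - x))" and
    Q: "\<forall>x\<le>L. \<bar>\<psi> x - poly Q x\<bar> \<le> \<delta>/2 * exp (c * (L - x))"
    using assms unfolding weighted_approximable_def by (meson half_gt_zero)
  have "\<bar>\<phi> x + \<psi> x - poly (P + Q) x\<bar> \<le> \<delta> * exp (c * (L - x))" if "x \<le> L" for x
    using P Q that abs_diff_triangle_ineq[of "\<phi> x" "\<psi> x" "poly P x" "poly Q x"] by fastforce
  then show "\<exists>R. \<forall>x\<le>L. \<bar>\<phi> x + \<psi> x - poly R x\<bar> \<le> \<delta> * exp (c * (L - x))"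
    by blast
qed

lemma weighted_approximable_cmult:
  assumes "weighted_approximable c L \<phi>"
  shows "weighted_approximable c L (\<lambda>x. a * \<phi> x)"
  unfolding weighted_approximable_def
proof (intro allI impI)
  fix \<delta> :: real
  assume "\<delta> > 0"
  then have "\<delta> / (\<bar>a\<bar> + 1) > 0" by simp
  then obtain P where P: "\<forall>x\<le>L. \<bar>\<phi> x - poly P x\<bar> \<le> \<delta> / (\<bar>a\<bar> + 1) * exp (c * (L - x))"
    using assms unfolding weighted_approximable_def by blast
  have "\<bar>a * \<phi> x - poly (smult a P) x\<bar> \<le> \<delta> * exp (c * (L - x))" if "x \<le> L" for x
  proof -
    have "\<bar>a * \<phi> x - poly (smult a P) x\<bar> = \<bar>a\<bar> * \<bar>\<phi> x - poly P x\<bar>"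
      by (simp add: abs_mult[symmetric] right_diff_distrib)
    also have "\<dots> \<le> (\<bar>a\<bar> + 1) * (\<delta> / (\<bar>a\<bar> + 1) * exp (c * (L - x)))"
      using P that by (intro mult_mono) auto
    finally show ?thesis by simp
  qed
  then show "\<exists>R. \<forall>x\<le>L. \<bar>a * \<phi> x - poly R x\<bar> \<le> \<delta> * exp (c * (L - x))"
    by blast
qed

lemma weighted_approximable_sum:
  assumes "\<And>i. i \<in> A \<Longrightarrow> weighted_approximable c L (\<phi> i)"
  shows "weighted_approximable c L (\<lambda>x. \<Sum>i\<in>A. \<phi> i x)"
proof -
  have "(\<lambda>x. 0) = poly (0 :: real poly)"
    by auto
  then have zero: "weighted_approximable c L (\<lambda>x. 0)"
    using weighted_approximable_poly[of c L 0] by simp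
  show ?thesis
  proof (cases "finite A")
    case True
    then show ?thesis using assms
      by (induction A rule: finite_induct) (simp_all add: zero weighted_approximable_add)
  qed (simp add: zero)
qed

lemma weighted_approximable_closed:
  assumes "\<And>\<delta>. \<delta> > 0 \<Longrightarrow>
    \<exists>\<psi>. weighted_approximable c L \<psi> \<and> (\<forall>x\<le>L. \<bar>\<phi> x - \<psi> x\<bar> \<le> \<delta> * exp (c * (L - x)))"
  shows "weighted_approximable c L \<phi>"
  unfolding weighted_approximable_def
proof (intro allI impI)
  fix \<delta> :: real
  assume \<delta>: "\<delta> > 0"
  then obtain \<psi> where "weighted_approximable c L \<psi>"
    and \<psi>: "\<forall>x\<le>L. \<bar>\<phi> x - \<psi> x\<bar> \<le> \<delta>/2 * exp (c * (L - x))"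
    using assms[of "\<delta>/2"] by auto
  then obtain P where P: "\<forall>x\<le>L. \<bar>\<psi> x - poly P x\<bar> \<le> \<delta>/2 * exp (c * (L - x))"
    using \<delta> unfolding weighted_approximable_def by (meson half_gt_zero)
  have "\<bar>\<phi> x - poly P x\<bar> \<le> \<delta> * exp (c * (L - x))" if "x \<le> L" for x
    using \<psi> P that abs_triangle_ineq[of "\<phi> x - \<psi> x" "\<psi> x - poly P x"] by fastforce
  then show "\<exists>P. \<forall>x\<le>L. \<bar>\<phi> x - poly P x\<bar> \<le> \<delta> * exp (c * (L - x))"
    by blast
qed

lemma abs_le_exp_weight:
  fixes \<rho> x L :: real
  assumes "\<rho> > 0" "x \<le> L"
  shows "\<bar>x\<bar> \<le> (\<bar>L\<bar> + 1/\<rho>) * exp (\<rho> * (L - x))"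
proof -
  have "\<rho> * (L - x) \<le> exp (\<rho> * (L - x))"
    using exp_ge_add_one_self[of "\<rho> * (L - x)"] by linarith
  then have "L - x \<le> exp (\<rho> * (L - x)) / \<rho>"
    using assms by (simp add: field_simps)
  moreover have "\<bar>L\<bar> \<le> \<bar>L\<bar> * exp (\<rho> * (L - x))"
    using assms by (simp add: mult_le_cancel_left1)
  ultimately show ?thesis
    using assms by (simp add: algebra_simps)
qed

lemma poly_bounded_by_exp_weight:
  fixes Q :: "real poly"
  assumes "\<rho> > 0"
  shows "\<exists>C>0. \<forall>x\<le>L. \<bar>poly Q x\<bar> \<le> C * exp (\<rho> * (L - x))"
  using assms
proof (induction Q arbitrary: \<rho>)
  case (pCons a Q)
  then obtain C where C: "C > 0" "\<forall>x\<le>L. \<bar>poly Q x\<bar> \<le> C * exp (\<rho>/2 * (L - x))"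
    by (meson half_gt_zero)
  define D where "D = \<bar>L\<bar> + 2/\<rho>"
  have "\<bar>poly (pCons a Q) x\<bar> \<le> (\<bar>a\<bar> + D * C) * exp (\<rho> * (L - x))" if x: "x \<le> L" for x
  proof -
    have "\<bar>x * poly Q x\<bar> \<le> (D * exp (\<rho>/2 * (L - x))) * (C * exp (\<rho>/2 * (L - x)))"
      unfolding abs_mult using abs_le_exp_weight[of "\<rho>/2" x L] C x pCons.prems
      by (intro mult_mono) (auto simp: D_def)
    also have "\<dots> = D * C * exp (\<rho> * (L - x))"
      by (simp add: mult_ac exp_add[symmetric] field_simps)
    finally have "\<bar>x * poly Q x\<bar> \<le> D * C * exp (\<rho> * (L - x))" .
    moreover have "\<bar>a\<bar> \<le> \<bar>a\<bar> * exp (\<rho> * (L - x))"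
      using x pCons.prems by (simp add: mult_le_cancel_left1)
    ultimately show ?thesis
      using abs_triangle_ineq[of a "x * poly Q x"] by (simp add: distrib_right)
  qed
  moreover have "\<bar>a\<bar> + D * C > 0"
    using pCons.prems C by (simp add: D_def add_nonneg_pos)
  ultimately show ?case by blast
qed (auto intro!: exI[of _ 1])

lemma power_div_fact_le_exp:
  fixes y :: real
  assumes "0 \<le> y"
  shows "y ^ N / fact N \<le> exp y"
proof -
  obtain t where "exp y = (\<Sum>m<Suc N. y ^ m / fact m) + exp t / fact (Suc N) * y ^ Suc N"
    using Maclaurin_exp_le[of y "Suc N"] by blast
  moreover have "0 \<le> (\<Sum>m<N. y ^ m / fact m)"
    using assms by (intro sum_nonneg) auto
  ultimately show ?thesis
    using assms by simp
qed

lemma exp_minus_taylor_le: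
  fixes y :: real
  shows "\<bar>exp y - (\<Sum>m<N. y ^ m / fact m)\<bar> \<le> \<bar>y\<bar> ^ N / fact N * exp \<bar>y\<bar>"
proof -
  obtain t where t: "\<bar>t\<bar> \<le> \<bar>y\<bar>" "exp y = (\<Sum>m<N. y ^ m / fact m) + exp t / fact N * y ^ N"
    using Maclaurin_exp_le[of y N] by blast
  then have "\<bar>exp y - (\<Sum>m<N. y ^ m / fact m)\<bar> = exp t / fact N * \<bar>y\<bar> ^ N"
    by (simp add: abs_mult power_abs)
  also have "\<dots> \<le> exp \<bar>y\<bar> / fact N * \<bar>y\<bar> ^ N"
    using t(1) by (intro mult_right_mono divide_right_mono) auto
  finally show ?thesis by (simp add: mult_ac)
qed

definition exp_taylor_poly :: "real \<Rightarrow> real \<Rightarrow> nat \<Rightarrow> real poly" where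
  "exp_taylor_poly a L N = (\<Sum>m<N. smult (a ^ m / fact m) ([:- L, 1:] ^ m))"

lemma poly_exp_taylor_poly:
  "poly (exp_taylor_poly a L N) x = (\<Sum>m<N. (a * (x - L)) ^ m / fact m)"
  by (simp add: exp_taylor_poly_def poly_sum power_mult_distrib)

lemma exp_taylor_poly_error:
  assumes a: "\<bar>a\<bar> \<le> c / 4" and x: "x \<le> L"
  shows "\<bar>exp (a * (x - L)) - poly (exp_taylor_poly a L N) x\<bar>
           \<le> (1/2) ^ N * exp (3 * c / 4 * (L - x))"
proof -
  define y where "y = a * (x - L)"
  have c: "0 \<le> c" using a by linarith
  have y: "\<bar>y\<bar> \<le> c / 4 * (L - x)"
    using mult_right_mono[OF a, of "L - x"] x by (simp add: y_def abs_mult)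
  have "\<bar>y\<bar> ^ N / fact N \<le> (1/2 * (c / 2 * (L - x))) ^ N / fact N"
    using y by (intro divide_right_mono power_mono) auto
  also have "\<dots> = (1/2) ^ N * ((c / 2 * (L - x)) ^ N / fact N)"
    by (simp only: power_mult_distrib) simp
  also have "\<dots> \<le> (1/2) ^ N * exp (c / 2 * (L - x))"
    using power_div_fact_le_exp[of "c / 2 * (L - x)" N] c x by (intro mult_left_mono) auto
  finally have yN: "\<bar>y\<bar> ^ N / fact N \<le> (1/2) ^ N * exp (c / 2 * (L - x))" .
  have "\<bar>exp y - poly (exp_taylor_poly a L N) x\<bar> \<le> \<bar>y\<bar> ^ N / fact N * exp \<bar>y\<bar>"
    using exp_minus_taylor_le[of y N] by (simp add: poly_exp_taylor_poly y_def)
  also have "\<dots> \<le> (1/2) ^ N * exp (c / 2 * (L - x)) * exp (c / 4 * (L - x))"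
    using yN y by (intro mult_mono) auto
  also have "\<dots> = (1/2) ^ N * exp (3 * c / 4 * (L - x))"
    by (simp add: mult.assoc exp_add[symmetric] field_simps)
  finally show ?thesis by (simp add: y_def)
qed

text \<open>For |a| \<le> c/4 the Taylor polynomial of exp (a (x - L)) is close to it relative to the
  weight; replacing the factor by it costs a polynomial factor, which the hypothesis on all
  polynomial multiples absorbs.\<close>

lemma weighted_approximable_exp_shift:
  assumes c: "c > 0" and la: "0 \<le> la" and a: "\<bar>a\<bar> \<le> c / 4"
    and approx: "\<And>Q. weighted_approximable c L (\<lambda>x. poly Q x * exp (la * (x - L)))"
  shows "weighted_approximable c L (\<lambda>x. poly Q x * exp ((la + a) * (x - L)))"
  unfolding weighted_approximable_def
proof (intro allI impI)
  fix \<delta> :: real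
  assume \<delta>: "\<delta> > 0"
  obtain C where C: "C > 0" "\<forall>x\<le>L. \<bar>poly Q x\<bar> \<le> C * exp (c / 4 * (L - x))"
    using poly_bounded_by_exp_weight[where \<rho> = "c / 4" and Q = Q and L = L] c by auto
  obtain N where N: "(1/2 :: real) ^ N < \<delta> / (2 * C)"
    using real_arch_pow_inv[of "\<delta> / (2 * C)" "1/2"] \<delta> C by auto
  define T where "T = exp_taylor_poly a L N"
  obtain P where P: "\<forall>x\<le>L. \<bar>poly (Q * T) x * exp (la * (x - L)) - poly P x\<bar>
                              \<le> \<delta>/2 * exp (c * (L - x))"
    using approx[of "Q * T"] \<delta> unfolding weighted_approximable_def by (meson half_gt_zero)
  have "\<bar>poly Q x * exp ((la + a) * (x - L)) - poly P x\<bar> \<le> \<delta> * exp (c * (L - x))"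
    if x: "x \<le> L" for x
  proof -
    have "exp (la * (x - L)) \<le> 1"
      using la x by (simp add: mult_nonneg_nonpos)
    then have "\<bar>poly Q x * exp (la * (x - L)) * (exp (a * (x - L)) - poly T x)\<bar>
          \<le> (C * exp (c / 4 * (L - x))) * 1 * ((1/2) ^ N * exp (3 * c / 4 * (L - x)))"
      unfolding abs_mult T_def using C x exp_taylor_poly_error[OF a x]
      by (intro mult_mono) auto
    also have "\<dots> = C * (1/2) ^ N * exp (c * (L - x))"
      by (simp add: mult_ac exp_add[symmetric] field_simps)
    also have "\<dots> \<le> \<delta>/2 * exp (c * (L - x))"
      using N C(1) by (intro mult_right_mono) (auto simp: field_simps)
    finally have taylor: "\<bar>poly Q x * exp (la * (x - L)) * (exp (a * (x - L)) - poly T x)\<bar>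
                    \<le> \<delta>/2 * exp (c * (L - x))" .
    have "poly Q x * exp ((la + a) * (x - L)) - poly P x
        = poly Q x * exp (la * (x - L)) * (exp (a * (x - L)) - poly T x)
          + (poly (Q * T) x * exp (la * (x - L)) - poly P x)"
      by (simp add: algebra_simps exp_add[symmetric])
    then have "\<bar>poly Q x * exp ((la + a) * (x - L)) - poly P x\<bar>
        \<le> \<bar>poly Q x * exp (la * (x - L)) * (exp (a * (x - L)) - poly T x)\<bar>
          + \<bar>poly (Q * T) x * exp (la * (x - L)) - poly P x\<bar>"
      by (simp only: abs_triangle_ineq)
    also have "\<dots> \<le> \<delta>/2 * exp (c * (L - x)) + \<delta>/2 * exp (c * (L - x))"
      using taylor P x by (intro add_mono) auto
    finally show ?thesis by simp
  qed
  then show "\<exists>P. \<forall>x\<le>L. \<bar>poly Q x * exp ((la + a) * (x - L)) - poly P x\<bar> \<le> \<delta> * exp (c * (L - x))"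
    by blast
qed

lemma weighted_approximable_poly_exp:
  assumes c: "c > 0" and a: "- c / 4 \<le> a"
  shows "weighted_approximable c L (\<lambda>x. poly Q x * exp (a * (x - L)))"
proof -
  have shift: "weighted_approximable c L (\<lambda>x. poly Q x * exp (a * (x - L)))"
    if "- c / 4 \<le> a"
      and "\<And>Q. weighted_approximable c L (\<lambda>x. poly Q x * exp (max 0 (a - c / 4) * (x - L)))"
    for a Q
  proof -
    define a0 where "a0 = max 0 (a - c / 4)"
    have "0 \<le> a0"
      by (simp add: a0_def)
    moreover have "\<bar>a - a0\<bar> \<le> c / 4"
    proof (cases "0 \<le> a - c / 4")
      case True
      then show ?thesis using c by (simp add: a0_def)
    next
      case False
      then show ?thesis using that(1) by (simp add: a0_def abs_if)
    qed
    ultimately have "weighted_approximable c L (\<lambda>x. poly Q x * exp ((a0 + (a - a0)) * (x - L)))"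
      using weighted_approximable_exp_shift[OF c _ _ that(2)[folded a0_def]] by blast
    then show ?thesis by simp
  qed
  have bounded: "weighted_approximable c L (\<lambda>x. poly Q x * exp (a * (x - L)))"
    if "- c / 4 \<le> a" "a \<le> real k * (c / 4)" for k a Q
    using that
  proof (induction k arbitrary: a Q)
    case 0
    then have "max 0 (a - c / 4) = 0"
      using c by simp
    with 0 show ?case
      by (rule_tac shift) (simp_all add: weighted_approximable_poly)
  next
    case (Suc k)
    have "- c / 4 \<le> max 0 (a - c / 4)" "max 0 (a - c / 4) \<le> real k * (c / 4)"
      using c Suc.prems by (auto simp: max_def algebra_simps)
    then show ?case
      using Suc.prems(1) by (rule_tac shift) (simp_all add: Suc.IH)
  qed
  obtain k where "a / (c / 4) \<le> real k"
    using real_arch_simple by blast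
  then have "a \<le> real k * (c / 4)"
    using c by (simp add: field_simps)
  then show ?thesis
    using bounded a by blast
qed

lemma weighted_approximable_exp:
  assumes "c > 0" "- c / 4 \<le> a"
  shows "weighted_approximable c L (\<lambda>x. exp (a * (x - L)))"
  using weighted_approximable_poly_exp[OF assms, of L 1] by simp

lemma continuous_on_exp_substitution:
  fixes \<phi> :: "real \<Rightarrow> real"
  assumes cont: "continuous_on {..L} \<phi>"
    and bound: "\<And>x. x \<le> L \<Longrightarrow> \<bar>\<phi> x\<bar> \<le> C * exp (a * (L - x))"
    and a: "a < \<beta>"
  shows "continuous_on {0..1} (\<lambda>s. if s = 0 then 0 else \<phi> (L + ln s) * s powr \<beta>)"
proof -
  define \<psi> where "\<psi> s = (if s = 0 then 0 else \<phi> (L + ln s) * s powr \<beta>)" for s :: real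
  have small: "\<bar>\<psi> s\<bar> \<le> C * s powr (\<beta> - a)" if "0 \<le> s" "s \<le> 1" for s
  proof (cases "s = 0")
    case False
    then have s: "0 < s"
      using that by simp
    have "\<bar>\<phi> (L + ln s)\<bar> \<le> C * s powr (- a)"
      using bound[of "L + ln s"] s that by (simp add: powr_def)
    then have "\<bar>\<psi> s\<bar> \<le> C * s powr (- a) * s powr \<beta>"
      using s by (simp add: \<psi>_def abs_mult mult_right_mono)
    then show ?thesis
      by (simp add: mult.assoc powr_add[symmetric])
  qed (simp add: \<psi>_def)
  have "continuous (at s within {0..1}) \<psi>" if s: "s \<in> {0..1}" for s
  proof (cases "s = 0")
    case True
    have "((\<lambda>s. C * s powr (\<beta> - a)) \<longlongrightarrow> C * 0) (at 0 within {0..1})"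
      using a by (intro tendsto_intros tendsto_zero_powrI[where b = "\<beta> - a"])
        (auto simp: eventually_at_filter)
    then have "(\<psi> \<longlongrightarrow> 0) (at 0 within {0..1})"
      by (rule_tac Lim_null_comparison) (auto simp: eventually_at_filter small)
    then show ?thesis
      using True by (simp add: continuous_within \<psi>_def)
  next
    case False
    then have s0: "0 < s"
      using s by simp
    have "continuous_on {0<..1} (\<lambda>s. \<phi> (L + ln s) * s powr \<beta>)"
      by (intro continuous_intros continuous_on_compose2[OF cont]) auto
    then have "continuous_on {0<..1} \<psi>"
      by (rule continuous_on_eq) (auto simp: \<psi>_def)
    then have "continuous (at s within {0<..1}) \<psi>"
      using s s0 by (simp add: continuous_on_eq_continuous_within)
    moreover have "at s within {0..1} = at s within {0<..1}"
      by (rule at_within_nhd[of s "{0<..}"]) (use s0 in auto)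
    ultimately show ?thesis
      by simp
  qed
  then show ?thesis
    unfolding \<psi>_def[symmetric] continuous_on_eq_continuous_within by blast
qed

text \<open>The substitution s = exp (x - L) maps the half-line onto (0, 1]; the factor
  s powr (c/4) makes the transformed function continuous at 0, so the Weierstrass theorem
  applies on [0, 1], and the monomials s^i turn back into exp ((i - c/4) (x - L)).\<close>

lemma weighted_approximable_if_exp_bounded:
  fixes \<phi> :: "real \<Rightarrow> real"
  assumes c: "c > 0" and cont: "continuous_on {..L} \<phi>"
    and bound: "\<And>x. x \<le> L \<Longrightarrow> \<bar>\<phi> x\<bar> \<le> C * exp (a * (L - x))" and a: "a < c / 4"
  shows "weighted_approximable c L \<phi>"
proof (rule weighted_approximable_closed)
  fix \<delta> :: real
  assume \<delta>: "\<delta> > 0"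
  define \<psi> where "\<psi> s = (if s = 0 then 0 else \<phi> (L + ln s) * s powr (c / 4))" for s :: real
  obtain g where g: "polynomial_function g" "\<forall>s\<in>{0..1}. norm (\<psi> s - g s) < \<delta>"
    using Stone_Weierstrass_polynomial_function[OF compact_Icc _ \<delta>]
      continuous_on_exp_substitution[OF cont bound a] unfolding \<psi>_def by blast
  obtain w n where g_eq: "g = (\<lambda>s. \<Sum>i\<le>n. w i * s ^ i)"
    using g(1) real_polynomial_function_iff_sum real_polynomial_function_eq by metis
  define \<Psi> where "\<Psi> x = (\<Sum>i\<le>n. w i * exp ((real i - c / 4) * (x - L)))" for x
  have "weighted_approximable c L \<Psi>"
    unfolding \<Psi>_def using c
    by (intro weighted_approximable_sum weighted_approximable_cmult weighted_approximable_exp) auto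
  moreover have "\<bar>\<phi> x - \<Psi> x\<bar> \<le> \<delta> * exp (c * (L - x))" if x: "x \<le> L" for x
  proof -
    define s where "s = exp (x - L)"
    have s: "0 < s" "s \<le> 1" "ln s = x - L"
      using x by (auto simp: s_def)
    have "\<psi> s = \<phi> x * exp (c / 4 * (x - L))"
      using s by (simp add: \<psi>_def powr_def)
    moreover have "g s = \<Psi> x * exp (c / 4 * (x - L))"
      unfolding g_eq \<Psi>_def sum_distrib_right s_def
      by (intro sum.cong refl)
        (simp add: mult.assoc exp_of_nat_mult[symmetric] exp_add[symmetric] algebra_simps)
    moreover have "\<bar>\<psi> s - g s\<bar> < \<delta>"
      using g(2) s by auto
    ultimately have "\<bar>\<phi> x - \<Psi> x\<bar> * exp (c / 4 * (x - L)) < \<delta>"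
      by (simp add: abs_mult left_diff_distrib[symmetric])
    then have "\<bar>\<phi> x - \<Psi> x\<bar> * (exp (c / 4 * (x - L)) * exp (c / 4 * (L - x)))
                 < \<delta> * exp (c / 4 * (L - x))"
      unfolding mult.assoc[symmetric] by (intro mult_strict_right_mono) auto
    also have "exp (c / 4 * (x - L)) * exp (c / 4 * (L - x)) = 1"
      by (simp add: exp_add[symmetric] field_simps)
    finally have "\<bar>\<phi> x - \<Psi> x\<bar> < \<delta> * exp (c / 4 * (L - x))"
      by simp
    also have "\<dots> \<le> \<delta> * exp (c * (L - x))"
      using \<delta> c x by (intro mult_left_mono) auto
    finally show ?thesis
      by simp
  qed
  ultimately show "\<exists>\<Psi>. weighted_approximable c L \<Psi> \<and>
      (\<forall>x\<le>L. \<bar>\<phi> x - \<Psi> x\<bar> \<le> \<delta> * exp (c * (L - x)))"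
    by blast
qed

lemma weighted_approximable_if_poly_bounded:
  assumes c: "c > 0" and cont: "continuous_on {..L} \<phi>" and bounded: "poly_bounded_on {..L} \<phi>"
  shows "weighted_approximable c L \<phi>"
proof -
  obtain P where P: "\<forall>x\<in>{..L}. \<bar>\<phi> x\<bar> \<le> poly P x"
    using bounded unfolding poly_bounded_on_def by blast
  obtain C where C: "\<forall>x\<le>L. \<bar>poly P x\<bar> \<le> C * exp (c / 8 * (L - x))"
    using poly_bounded_by_exp_weight[where \<rho> = "c / 8" and Q = P and L = L] c by auto
  have "\<bar>\<phi> x\<bar> \<le> C * exp (c / 8 * (L - x))" if "x \<le> L" for x
    using P C that by force
  from weighted_approximable_if_exp_bounded[OF c cont this] c show ?thesis
    by simp
qed

section \<open>Polynomials with prescribed second-order data at L\<close>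

lemma weighted_approximable_endpoint:
  assumes approx: "weighted_approximable c L \<phi>" and c: "0 \<le> c" and \<epsilon>: "\<epsilon> > 0"
  obtains R where "poly R L = \<phi> L"
    "\<And>x. x \<le> L \<Longrightarrow> \<bar>poly R x - \<phi> x\<bar> \<le> \<epsilon> * exp (c * (L - x))"
proof -
  obtain R where R: "\<forall>x\<le>L. \<bar>\<phi> x - poly R x\<bar> \<le> \<epsilon>/2 * exp (c * (L - x))"
    using approx \<epsilon> unfolding weighted_approximable_def by (meson half_gt_zero)
  define R' where "R' = R + [:\<phi> L - poly R L:]"
  have "\<bar>poly R' x - \<phi> x\<bar> \<le> \<epsilon> * exp (c * (L - x))" if x: "x \<le> L" for x
  proof -
    have "\<bar>\<phi> L - poly R L\<bar> \<le> \<epsilon>/2 * exp (c * (L - L))"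
      using R by blast
    also have "\<dots> \<le> \<epsilon>/2 * exp (c * (L - x))"
      using c x \<epsilon> by (intro mult_left_mono) auto
    finally have "\<bar>(\<phi> L - poly R L) - (\<phi> x - poly R x)\<bar>
        \<le> \<epsilon>/2 * exp (c * (L - x)) + \<epsilon>/2 * exp (c * (L - x))"
      using R x abs_triangle_ineq4[of "\<phi> L - poly R L" "\<phi> x - poly R x"] by fastforce
    then show ?thesis
      by (simp add: R'_def algebra_simps)
  qed
  moreover have "poly R' L = \<phi> L"
    by (simp add: R'_def)
  ultimately show ?thesis
    using that by blast
qed

lemma pderiv_surj: "\<exists>A. pderiv A = (Q :: real poly)"
proof
  show "pderiv (\<Sum>i\<le>degree Q. monom (coeff Q i / real (Suc i)) (Suc i)) = Q"
    using higher_pderiv_sum[of 1 "\<lambda>i. monom (coeff Q i / real (Suc i)) (Suc i)" "{..degree Q}"]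
    by (simp add: pderiv_monom poly_as_sum_of_monoms del: of_nat_Suc)
qed

lemma poly_with_second_pderiv:
  fixes R :: "real poly"
  obtains p where "pderiv (pderiv p) = R" "poly p L = y0" "poly (pderiv p) L = y1"
proof -
  obtain A1 A2 where A1: "pderiv A1 = R" and A2: "pderiv A2 = A1"
    using pderiv_surj by metis
  define p where "p = A2 + [:y0 - poly A2 L - (y1 - poly A1 L) * L, y1 - poly A1 L:]"
  have dp: "pderiv p = A1 + [:y1 - poly A1 L:]"
    by (simp add: p_def pderiv_add A2 pderiv_pCons)
  show ?thesis
    by (rule that[of p]) (simp_all add: dp A1 pderiv_add pderiv_pCons, simp add: p_def algebra_simps)
qed

lemma le_right_endpoint_if_deriv_nonneg:
  fixes \<phi> :: "real \<Rightarrow> real"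
  assumes deriv: "\<And>y. y \<le> L \<Longrightarrow> (\<phi> has_real_derivative \<phi>' y) (at y within {..L})"
    and nonneg: "\<And>y. y \<le> L \<Longrightarrow> 0 \<le> \<phi>' y" and x: "x \<le> L"
  shows "\<phi> x \<le> \<phi> L"
proof (rule DERIV_nonneg_imp_increasing_open[OF x])
  fix y
  assume y: "x < y" "y < L"
  then have "(\<phi> has_real_derivative \<phi>' y) (at y within {..<L})"
    using deriv[of y] by (auto intro: has_field_derivative_subset)
  then have "(\<phi> has_real_derivative \<phi>' y) (at y)"
    using y at_within_open[of y "{..<L}"] by simp
  then show "\<exists>D. (\<phi> has_real_derivative D) (at y) \<and> 0 \<le> D"
    using nonneg y by auto
next
  have "continuous_on {..L} \<phi>"
    by (rule DERIV_continuous_on) (use deriv in auto)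
  then show "continuous_on {x..L} \<phi>"
    by (rule continuous_on_subset) auto
qed

lemma abs_le_exp_weight_if_deriv:
  fixes u u' :: "real \<Rightarrow> real"
  assumes c: "c > 0"
    and deriv: "\<And>y. y \<le> L \<Longrightarrow> (u has_real_derivative u' y) (at y within {..L})"
    and u_L: "u L = 0"
    and bound: "\<And>y. y \<le> L \<Longrightarrow> \<bar>u' y\<bar> \<le> M * exp (c * (L - y))"
    and x: "x \<le> L"
  shows "\<bar>u x\<bar> \<le> M / c * exp (c * (L - x))"
proof -
  define E where "E y = M / c * exp (c * (L - y))" for y
  have E: "(E has_real_derivative - M * exp (c * (L - y))) (at y within {..L})" for y
    unfolding E_def using c by (auto intro!: derivative_eq_intros)
  have "0 \<le> u' y - - M * exp (c * (L - y))" "0 \<le> - u' y - - M * exp (c * (L - y))"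
    if "y \<le> L" for y
    using abs_le_D1[OF bound[OF that]] abs_le_D2[OF bound[OF that]] by linarith+
  then have "u x - E x \<le> u L - E L" and "- u x - E x \<le> - u L - E L"
    by (intro le_right_endpoint_if_deriv_nonneg[OF DERIV_diff[OF deriv E] _ x]
        le_right_endpoint_if_deriv_nonneg[OF DERIV_diff[OF DERIV_minus[OF deriv] E] _ x]; simp)+
  moreover have "0 \<le> E L"
    using bound[of L] c by (simp add: E_def)
  ultimately show ?thesis
    using u_L by (simp add: E_def abs_le_iff)
qed

lemma second_order_weighted_poly_approx:
  assumes c: "c > 0"
    and d1: "\<And>x. x \<le> L \<Longrightarrow> (h has_real_derivative h1 x) (at x within {..L})"
    and d2: "\<And>x. x \<le> L \<Longrightarrow> (h1 has_real_derivative h2 x) (at x within {..L})"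
    and approx: "weighted_approximable c L h2" and \<epsilon>: "\<epsilon> > 0"
  obtains p where "poly p L = h L" "poly (pderiv p) L = h1 L" "poly (pderiv (pderiv p)) L = h2 L"
    "\<And>x. x \<le> L \<Longrightarrow> \<bar>poly p x - h x\<bar> \<le> \<epsilon> / c\<^sup>2 * exp (c * (L - x))"
    "\<And>x. x \<le> L \<Longrightarrow> \<bar>poly (pderiv (pderiv p)) x - h2 x\<bar> \<le> \<epsilon> * exp (c * (L - x))"
proof -
  obtain R where R: "poly R L = h2 L" "\<And>x. x \<le> L \<Longrightarrow> \<bar>poly R x - h2 x\<bar> \<le> \<epsilon> * exp (c * (L - x))"
    using weighted_approximable_endpoint[OF approx _ \<epsilon>] c by auto
  obtain p where p: "pderiv (pderiv p) = R" "poly p L = h L" "poly (pderiv p) L = h1 L"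
    using poly_with_second_pderiv by blast
  have poly_deriv: "((\<lambda>x. poly q x) has_real_derivative poly (pderiv q) y) (at y within {..L})" for q y
    by (rule has_field_derivative_at_within) simp
  have h1_close: "\<bar>poly (pderiv p) x - h1 x\<bar> \<le> \<epsilon> / c * exp (c * (L - x))" if "x \<le> L" for x
    using p R by (intro abs_le_exp_weight_if_deriv[OF c DERIV_diff[OF poly_deriv d2] _ _ that]) auto
  have "\<bar>poly p x - h x\<bar> \<le> \<epsilon> / c / c * exp (c * (L - x))" if "x \<le> L" for x
    using p h1_close by (intro abs_le_exp_weight_if_deriv[OF c DERIV_diff[OF poly_deriv d1] _ _ that]) auto
  then show ?thesis
    using that p R by (simp add: power2_eq_square)
qed

lemma estimator_weighted_poly_approx:
  assumes c: "c > 0"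
    and d1: "\<And>x. x \<le> L \<Longrightarrow> (h has_real_derivative h1 x) (at x within {..L})"
    and d2: "\<And>x. x \<le> L \<Longrightarrow> (h1 has_real_derivative h2 x) (at x within {..L})"
    and approx: "weighted_approximable c L h2" and \<delta>: "\<delta> > 0"
  shows "\<exists>p. poly p L = h L \<and> poly (pderiv p) L = h1 L \<and> poly (pderiv (pderiv p)) L = h2 L \<and>
     (\<forall>x\<le>L. \<bar>(poly p x - b\<^sup>2 * poly (pderiv (pderiv p)) x) - (h x - b\<^sup>2 * h2 x)\<bar>
              \<le> \<delta> * exp (c * (L - x)))"
proof -
  define K where "K = 1 / c\<^sup>2 + b\<^sup>2"
  define \<epsilon> where "\<epsilon> = \<delta> / K"
  have K: "0 < K"
    using c by (simp add: K_def add_pos_nonneg)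
  then have \<epsilon>: "\<epsilon> > 0"
    using \<delta> by (simp add: \<epsilon>_def)
  have "\<epsilon> / c\<^sup>2 + b\<^sup>2 * \<epsilon> = \<epsilon> * K"
    by (simp add: K_def algebra_simps)
  then have \<delta>_eq: "\<epsilon> / c\<^sup>2 + b\<^sup>2 * \<epsilon> = \<delta>"
    using K by (simp add: \<epsilon>_def)
  obtain p where p: "poly p L = h L" "poly (pderiv p) L = h1 L" "poly (pderiv (pderiv p)) L = h2 L"
    and p0: "\<And>x. x \<le> L \<Longrightarrow> \<bar>poly p x - h x\<bar> \<le> \<epsilon> / c\<^sup>2 * exp (c * (L - x))"
    and p2: "\<And>x. x \<le> L \<Longrightarrow> \<bar>poly (pderiv (pderiv p)) x - h2 x\<bar> \<le> \<epsilon> * exp (c * (L - x))"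
    using second_order_weighted_poly_approx[OF c d1 d2 approx \<epsilon>] by blast
  have "\<bar>(poly p x - b\<^sup>2 * poly (pderiv (pderiv p)) x) - (h x - b\<^sup>2 * h2 x)\<bar> \<le> \<delta> * exp (c * (L - x))"
    if x: "x \<le> L" for x
  proof -
    have "(poly p x - b\<^sup>2 * poly (pderiv (pderiv p)) x) - (h x - b\<^sup>2 * h2 x)
        = (poly p x - h x) - b\<^sup>2 * (poly (pderiv (pderiv p)) x - h2 x)"
      by (simp add: algebra_simps)
    then have "\<bar>(poly p x - b\<^sup>2 * poly (pderiv (pderiv p)) x) - (h x - b\<^sup>2 * h2 x)\<bar>
        \<le> \<bar>poly p x - h x\<bar> + \<bar>b\<^sup>2 * (poly (pderiv (pderiv p)) x - h2 x)\<bar>"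
      by (simp only: abs_triangle_ineq4)
    also have "\<dots> = \<bar>poly p x - h x\<bar> + b\<^sup>2 * \<bar>poly (pderiv (pderiv p)) x - h2 x\<bar>"
      by (simp add: abs_mult)
    also have "\<dots> \<le> \<epsilon> / c\<^sup>2 * exp (c * (L - x)) + b\<^sup>2 * (\<epsilon> * exp (c * (L - x)))"
      using p0[OF x] p2[OF x] by (intro add_mono mult_left_mono) auto
    also have "\<dots> = \<delta> * exp (c * (L - x))"
      by (simp flip: \<delta>_eq add: algebra_simps)
    finally show ?thesis .
  qed
  with p show ?thesis
    by blast
qed

section \<open>Measurability of the estimators\<close>

lemma borel_measurable_continuous_on_atLeast:
  fixes f :: "real \<Rightarrow> real"
  assumes "continuous_on {L..} f"
  shows "(\<lambda>x. f (max x L)) \<in> borel_measurable borel"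
  by (intro borel_measurable_continuous_onI continuous_on_compose2[OF assms])
    (auto intro!: continuous_intros)

lemma borel_measurable_continuous_on_atMost:
  fixes f :: "real \<Rightarrow> real"
  assumes "continuous_on {..L} f"
  shows "(\<lambda>x. f (min x L)) \<in> borel_measurable borel"
  by (intro borel_measurable_continuous_onI continuous_on_compose2[OF assms])
    (auto intro!: continuous_intros)

text \<open>A derivative is a pointwise limit of continuous difference quotients.\<close>

lemma borel_measurable_derivative_atLeast:
  fixes f :: "real \<Rightarrow> real"
  assumes deriv: "\<And>x. L \<le> x \<Longrightarrow> (f has_real_derivative f' x) (at x within {L..})"
  shows "(\<lambda>x. f' (max x L)) \<in> borel_measurable borel"
proof (rule borel_measurable_LIMSEQ_real)
  have cont: "continuous_on {L..} f"
    by (rule DERIV_continuous_on) (use deriv in auto)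
  fix n :: nat
  have "continuous_on UNIV (\<lambda>x. f (max x L + 1 / Suc n))"
    by (intro continuous_on_compose2[OF cont]) (auto intro!: continuous_intros add_increasing2)
  with cont show "(\<lambda>x. (f (max x L + 1 / Suc n) - f (max x L)) * Suc n) \<in> borel_measurable borel"
    by (intro borel_measurable_times borel_measurable_diff borel_measurable_continuous_onI
        borel_measurable_continuous_on_atLeast) auto
next
  fix x :: real
  define y where "y = max x L"
  have y: "L \<le> y"
    by (simp add: y_def)
  have "((\<lambda>z. (f z - f y) / (z - y)) \<longlongrightarrow> f' y) (at y within {L..})"
    using deriv[OF y] by (simp add: has_field_derivative_iff)
  moreover have "filterlim (\<lambda>n. y + 1 / Suc n) (at y within {L..}) sequentially"
    unfolding filterlim_at
  proof
    show "\<forall>\<^sub>F n in sequentially. y + 1 / Suc n \<in> {L..} \<and> y + 1 / Suc n \<noteq> y"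
      using y by (auto intro!: always_eventually simp: add_increasing2)
    show "(\<lambda>n. y + 1 / real (Suc n)) \<longlonglongrightarrow> y"
      using tendsto_add[OF tendsto_const LIMSEQ_inverse_real_of_nat, of y]
      by (simp add: inverse_eq_divide)
  qed
  ultimately have "(\<lambda>n. (f (y + 1 / Suc n) - f y) / (y + 1 / Suc n - y)) \<longlonglongrightarrow> f' y"
    by (rule filterlim_compose)
  then show "(\<lambda>n. (f (max x L + 1 / Suc n) - f (max x L)) * Suc n) \<longlonglongrightarrow> f' (max x L)"
    by (simp add: y_def)
qed

lemma borel_measurable_glued_estimator:
  fixes f f1 f2 H :: "real \<Rightarrow> real"
  assumes f_d1: "\<And>x. L \<le> x \<Longrightarrow> (f has_real_derivative f1 x) (at x within {L..})"
    and f_d2: "\<And>x. L \<le> x \<Longrightarrow> (f1 has_real_derivative f2 x) (at x within {L..})"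
    and H: "continuous_on {..L} H"
  shows "(\<lambda>x. if L \<le> x then f x - b\<^sup>2 * f2 x else H x) \<in> borel_measurable borel"
proof -
  have "continuous_on {L..} f"
    by (rule DERIV_continuous_on) (use f_d1 in auto)
  then have "(\<lambda>x. if L \<le> x then f (max x L) - b\<^sup>2 * f2 (max x L) else H (min x L))
               \<in> borel_measurable borel"
    using borel_measurable_continuous_on_atLeast borel_measurable_derivative_atLeast[OF f_d2]
      borel_measurable_continuous_on_atMost[OF H] by measurable
  also have "(\<lambda>x. if L \<le> x then f (max x L) - b\<^sup>2 * f2 (max x L) else H (min x L))
               = (\<lambda>x. if L \<le> x then f x - b\<^sup>2 * f2 x else H x)"
    by (auto simp: fun_eq_iff max_def min_def)
  finally show ?thesis .
qed

section \<open>The kernel loss\<close>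

lemma nn_integral_exp_halfline_le:
  fixes a L :: real
  assumes a: "a > 0"
  shows "(\<integral>\<^sup>+x. ennreal (exp ((x - L) / a)) * indicator {..<L} x \<partial>lborel) \<le> ennreal a"
proof -
  define g where "g x = ennreal (exp ((x - L) / a)) * indicator {..<L} x" for x :: real
  have "(\<integral>\<^sup>+x. g x \<partial>lborel) = (\<integral>\<^sup>+y. g (- y) \<partial>lborel)"
  proof -
    have "g \<in> borel_measurable borel"
      unfolding g_def by measurable
    then show ?thesis
      by (subst lborel_distr_uminus[symmetric], subst nn_integral_distr) auto
  qed
  also have "\<dots> \<le> (\<integral>\<^sup>+y. ennreal (exp ((- y - L) / a)) * indicator {- L..} y \<partial>lborel)"
    by (intro nn_integral_mono) (auto simp: g_def indicator_def)
  also have "\<dots> = ennreal (0 - (- a * exp ((- (- L) - L) / a)))"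
  proof (rule nn_integral_FTC_atLeast)
    show "((\<lambda>y. - a * exp ((- y - L) / a)) has_real_derivative exp ((- y - L) / a)) (at y)" for y
      using a by (auto intro!: derivative_eq_intros)
    show "((\<lambda>y. - a * exp ((- y - L) / a)) \<longlongrightarrow> 0) at_top"
      using a by real_asymp
  qed auto
  finally show ?thesis
    by (simp add: g_def)
qed

lemma square_perturbation_le:
  fixes u v \<epsilon> W :: real
  assumes \<epsilon>: "0 < \<epsilon>" "\<epsilon> \<le> 1" and v: "\<bar>v\<bar> \<le> \<epsilon> * W"
  shows "(u + v)\<^sup>2 \<le> (1 + \<epsilon>) * u\<^sup>2 + 2 * \<epsilon> * W\<^sup>2"
proof -
  \<comment> \<open>Young's inequality, multiplied by \<epsilon>\<close>
  have "\<epsilon> * (u + v)\<^sup>2 \<le> \<epsilon> * (1 + \<epsilon>) * u\<^sup>2 + (1 + \<epsilon>) * v\<^sup>2"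
    using zero_le_power2[of "\<epsilon> * u - v"] by (simp add: power2_eq_square algebra_simps)
  also have "(1 + \<epsilon>) * v\<^sup>2 \<le> 2 * (\<epsilon> * W)\<^sup>2"
  proof -
    have "v\<^sup>2 \<le> (\<epsilon> * W)\<^sup>2"
      using v by (metis abs_ge_zero power2_abs power_mono)
    then show ?thesis
      using \<epsilon> by (intro mult_mono) auto
  qed
  finally have "\<epsilon> * (u + v)\<^sup>2 \<le> \<epsilon> * ((1 + \<epsilon>) * u\<^sup>2 + 2 * \<epsilon> * W\<^sup>2)"
    by (simp add: algebra_simps power2_eq_square)
  then show ?thesis
    using \<epsilon> by simp
qed

lemma kernel_integrand_perturbation:
  fixes b \<epsilon> L x q u v :: real
  assumes b: "b > 0" and \<epsilon>: "0 < \<epsilon>" "\<epsilon> \<le> 1" and q: "L \<le> q" and x: "x < L"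
    and v: "\<bar>v\<bar> \<le> \<epsilon> * exp ((L - x) / (4 * b))"
  shows "(u + v)\<^sup>2 * (1 / (2 * b)) * exp (- \<bar>x - q\<bar> / b)
           \<le> (1 + \<epsilon>) * (u\<^sup>2 * (1 / (2 * b)) * exp (- \<bar>x - q\<bar> / b))
              + \<epsilon> / b * exp ((x - L) / (2 * b))"
proof -
  define k where "k = 1 / (2 * b) * exp (- \<bar>x - q\<bar> / b)"
  have "- \<bar>x - q\<bar> / b \<le> (x - L) / b"
    using b q x by (simp add: divide_right_mono)
  then have k: "0 \<le> k" "k \<le> 1 / (2 * b) * exp ((x - L) / b)"
    using b unfolding k_def by (auto intro!: divide_right_mono)
  have "(u + v)\<^sup>2 * k \<le> ((1 + \<epsilon>) * u\<^sup>2 + 2 * \<epsilon> * (exp ((L - x) / (4 * b)))\<^sup>2) * k"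
    using square_perturbation_le[OF \<epsilon> v] k(1) by (rule mult_right_mono)
  also have "\<dots> = (1 + \<epsilon>) * (u\<^sup>2 * k) + 2 * \<epsilon> * (exp ((L - x) / (4 * b)))\<^sup>2 * k"
    by (simp add: algebra_simps)
  also have "\<dots> \<le> (1 + \<epsilon>) * (u\<^sup>2 * k)
                  + 2 * \<epsilon> * (exp ((L - x) / (4 * b)))\<^sup>2 * (1 / (2 * b) * exp ((x - L) / b))"
    using k(2) \<epsilon> by (intro add_left_mono mult_left_mono) auto
  also have "2 * \<epsilon> * (exp ((L - x) / (4 * b)))\<^sup>2 * (1 / (2 * b) * exp ((x - L) / b))
               = \<epsilon> / b * exp ((x - L) / (2 * b))"
  proof -
    have "(exp ((L - x) / (4 * b)))\<^sup>2 * exp ((x - L) / b) = exp ((x - L) / (2 * b))"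
      unfolding power2_eq_square exp_add[symmetric] using b by (simp add: field_simps)
    then show ?thesis
      using b by (simp add: field_simps)
  qed
  finally show ?thesis
    by (simp add: k_def mult.assoc)
qed

lemma kernel_integrand_measurable:
  fixes G f :: "real \<Rightarrow> real"
  assumes \<mu>: "sets \<mu> = sets borel"
    and f: "(\<lambda>x. f (max x L)) \<in> borel_measurable borel"
    and G: "G \<in> borel_measurable borel"
  shows "(\<lambda>(x, q). ennreal ((G x - f q)\<^sup>2 * (1 / (2 * b)) * exp (- \<bar>x - q\<bar> / b)) * indicator {L..} q)
          \<in> borel_measurable (lborel \<Otimes>\<^sub>M \<mu>)"
proof -
  have "sets (lborel \<Otimes>\<^sub>M \<mu>) = sets (borel \<Otimes>\<^sub>M borel)"
    using \<mu> by (intro sets_pair_measure_cong) auto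
  then have sets_eq: "borel_measurable (lborel \<Otimes>\<^sub>M \<mu>) = borel_measurable (borel \<Otimes>\<^sub>M borel)"
    by (rule measurable_cong_sets) simp
  have on_support: "(\<lambda>(x, q). ennreal ((G x - f q)\<^sup>2 * (1 / (2 * b)) * exp (- \<bar>x - q\<bar> / b)) * indicator {L..} q)
      = (\<lambda>(x, q). ennreal ((G x - f (max q L))\<^sup>2 * (1 / (2 * b)) * exp (- \<bar>x - q\<bar> / b))
                   * indicator {L..} q)"
    by (auto simp: fun_eq_iff indicator_def max_def)
  show ?thesis
    unfolding sets_eq on_support using f G by measurable
qed

lemma kernel_loss_perturbation:
  fixes \<mu> :: "real measure" and f G G' :: "real \<Rightarrow> real"
  assumes b: "b > 0" and \<mu>: "prob_space \<mu>" "sets \<mu> = sets borel"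
    and f: "(\<lambda>x. f (max x L)) \<in> borel_measurable borel"
    and G: "G \<in> borel_measurable borel" and G': "G' \<in> borel_measurable borel"
    and eq: "\<And>x. L \<le> x \<Longrightarrow> G x = G' x"
    and close: "\<And>x. x < L \<Longrightarrow> \<bar>G x - G' x\<bar> \<le> \<epsilon> * exp ((L - x) / (4 * b))"
    and \<epsilon>: "0 < \<epsilon>" "\<epsilon> \<le> 1"
  shows "kernel_loss \<mu> L b f G \<le> ennreal (1 + \<epsilon>) * kernel_loss \<mu> L b f G' + ennreal (2 * \<epsilon>)"
proof -
  interpret prob_space \<mu>
    by (rule \<mu>(1))
  define \<Phi> where "\<Phi> g x q = ennreal ((g x - f q)\<^sup>2 * (1 / (2 * b)) * exp (- \<bar>x - q\<bar> / b))
                              * indicator {L..} q" for g :: "real \<Rightarrow> real" and x q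
  define E where "E x = ennreal (\<epsilon> / b * exp ((x - L) / (2 * b))) * indicator {..<L} x" for x
  have pointwise: "\<Phi> G x q \<le> ennreal (1 + \<epsilon>) * \<Phi> G' x q + E x * indicator {L..} q" for x q
  proof (cases "L \<le> q \<and> x < L")
    case True
    then have q: "L \<le> q" and x: "x < L"
      by auto
    define B where "B = (G' x - f q)\<^sup>2 * (1 / (2 * b)) * exp (- \<bar>x - q\<bar> / b)"
    define C where "C = \<epsilon> / b * exp ((x - L) / (2 * b))"
    have "(G x - f q)\<^sup>2 * (1 / (2 * b)) * exp (- \<bar>x - q\<bar> / b) \<le> (1 + \<epsilon>) * B + C"
      using kernel_integrand_perturbation[OF b \<epsilon> q x close[OF x], where u = "G' x - f q"]
      by (simp add: B_def C_def)
    then have "ennreal ((G x - f q)\<^sup>2 * (1 / (2 * b)) * exp (- \<bar>x - q\<bar> / b))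
                 \<le> ennreal ((1 + \<epsilon>) * B + C)"
      by (rule ennreal_leI)
    also have "\<dots> = ennreal (1 + \<epsilon>) * ennreal B + ennreal C"
    proof -
      have "0 \<le> B" "0 \<le> C"
        using b \<epsilon> by (simp_all add: B_def C_def)
      with \<epsilon> show ?thesis
        by (simp add: ennreal_mult)
    qed
    finally show ?thesis
      using q x by (simp add: \<Phi>_def E_def B_def C_def)
  next
    case False
    moreover have "\<Phi> G' x q \<le> ennreal (1 + \<epsilon>) * \<Phi> G' x q"
      using mult_right_mono[of 1 "ennreal (1 + \<epsilon>)" "\<Phi> G' x q"] \<epsilon> by simp
    ultimately show ?thesis
      by (cases "L \<le> q") (auto simp: \<Phi>_def eq intro: add_increasing2)
  qed
  have \<Phi>_meas: "(\<lambda>(x, q). \<Phi> g x q) \<in> borel_measurable (lborel \<Otimes>\<^sub>M \<mu>)"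
    if "g \<in> borel_measurable borel" for g
    unfolding \<Phi>_def by (rule kernel_integrand_measurable[OF \<mu>(2) f that])
  have inner: "(\<integral>\<^sup>+q. \<Phi> G x q \<partial>\<mu>) \<le> ennreal (1 + \<epsilon>) * (\<integral>\<^sup>+q. \<Phi> G' x q \<partial>\<mu>) + E x" for x
  proof -
    have "(\<integral>\<^sup>+q. \<Phi> G x q \<partial>\<mu>)
        \<le> (\<integral>\<^sup>+q. ennreal (1 + \<epsilon>) * \<Phi> G' x q + E x * indicator {L..} q \<partial>\<mu>)"
      by (rule nn_integral_mono) (rule pointwise)
    also have "\<dots> = ennreal (1 + \<epsilon>) * (\<integral>\<^sup>+q. \<Phi> G' x q \<partial>\<mu>) + E x * emeasure \<mu> {L..}"
      using measurable_Pair2[OF \<Phi>_meas[OF G'], of x] \<mu>(2)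
      by (simp add: nn_integral_add nn_integral_cmult nn_integral_cmult_indicator)
    also have "\<dots> \<le> ennreal (1 + \<epsilon>) * (\<integral>\<^sup>+q. \<Phi> G' x q \<partial>\<mu>) + E x"
      using mult_left_mono[OF subprob_emeasure_le_1, of "E x" "{L..}"] by (intro add_left_mono) simp
    finally show ?thesis .
  qed
  have "kernel_loss \<mu> L b f G = (\<integral>\<^sup>+x. (\<integral>\<^sup>+q. \<Phi> G x q \<partial>\<mu>) \<partial>lborel)"
    by (simp add: kernel_loss_def \<Phi>_def)
  also have "\<dots> \<le> (\<integral>\<^sup>+x. ennreal (1 + \<epsilon>) * (\<integral>\<^sup>+q. \<Phi> G' x q \<partial>\<mu>) + E x \<partial>lborel)"
    by (rule nn_integral_mono) (rule inner)
  also have "\<dots> = ennreal (1 + \<epsilon>) * kernel_loss \<mu> L b f G' + (\<integral>\<^sup>+x. E x \<partial>lborel)"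
    using borel_measurable_nn_integral[OF \<Phi>_meas[OF G']]
    by (simp add: nn_integral_add nn_integral_cmult kernel_loss_def \<Phi>_def E_def)
  also have "(\<integral>\<^sup>+x. E x \<partial>lborel) \<le> ennreal (2 * \<epsilon>)"
  proof -
    have "(\<integral>\<^sup>+x. E x \<partial>lborel)
        = (\<integral>\<^sup>+x. ennreal (\<epsilon> / b) * (ennreal (exp ((x - L) / (2 * b))) * indicator {..<L} x) \<partial>lborel)"
      using \<epsilon> b by (intro nn_integral_cong) (simp add: E_def ennreal_mult[symmetric] mult.assoc[symmetric])
    also have "\<dots> = ennreal (\<epsilon> / b)
                      * (\<integral>\<^sup>+x. ennreal (exp ((x - L) / (2 * b))) * indicator {..<L} x \<partial>lborel)"
      by (rule nn_integral_cmult) measurable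
    also have "\<dots> \<le> ennreal (\<epsilon> / b) * ennreal (2 * b)"
      using b by (intro mult_left_mono nn_integral_exp_halfline_le) auto
    also have "\<dots> = ennreal (2 * \<epsilon>)"
      using \<epsilon> b by (simp add: ennreal_mult[symmetric])
    finally show ?thesis .
  qed
  finally show ?thesis
    by (simp add: add_left_mono)
qed

lemma ennreal_tendsto_of_mutual_bounds:
  fixes a :: ennreal and s :: "nat \<Rightarrow> ennreal" and \<epsilon> :: "nat \<Rightarrow> real"
  assumes \<epsilon>: "\<epsilon> \<longlonglongrightarrow> 0" "\<And>n. 0 \<le> \<epsilon> n"
    and upper: "\<And>n. a \<le> ennreal (1 + \<epsilon> n) * s n + ennreal (2 * \<epsilon> n)"
    and lower: "\<And>n. s n \<le> ennreal (1 + \<epsilon> n) * a + ennreal (2 * \<epsilon> n)"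
  shows "s \<longlonglongrightarrow> a"
proof (cases "a = top")
  case True
  then have "s n = top" for n
    using upper[of n] \<epsilon>(2)[of n]
    by (metis ennreal_add_less_top ennreal_less_top ennreal_mult_less_top less_top top_unique)
  then have "s = (\<lambda>n. top)"
    by (simp add: fun_eq_iff)
  then show ?thesis
    using True by simp
next
  case False
  then obtain r where a: "a = ennreal r" "0 \<le> r"
    by (cases a) auto
  define t where "t n = enn2real (s n)" for n
  have "s n \<noteq> top" for n
    using lower[of n] a
    by (metis ennreal_add_less_top ennreal_less_top ennreal_mult_less_top less_top top_unique)
  then have s: "\<And>n. s n = ennreal (t n)" "\<And>n. 0 \<le> t n"
    by (simp_all add: t_def ennreal_enn2real_if)
  have lower_t: "(r - 2 * \<epsilon> n) / (1 + \<epsilon> n) \<le> t n" for n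
  proof -
    have "ennreal r \<le> ennreal ((1 + \<epsilon> n) * t n + 2 * \<epsilon> n)"
      using upper[of n] \<epsilon>(2)[of n] s a by (simp add: ennreal_mult)
    then have "r \<le> (1 + \<epsilon> n) * t n + 2 * \<epsilon> n"
      using \<epsilon>(2)[of n] s(2)[of n] by (subst (asm) ennreal_le_iff) auto
    then show ?thesis
      using \<epsilon>(2)[of n] by (simp add: field_simps)
  qed
  have upper_t: "t n \<le> (1 + \<epsilon> n) * r + 2 * \<epsilon> n" for n
  proof -
    have "ennreal (t n) \<le> ennreal ((1 + \<epsilon> n) * r + 2 * \<epsilon> n)"
      using lower[of n] \<epsilon>(2)[of n] s a by (simp add: ennreal_mult)
    then show ?thesis
      using \<epsilon>(2)[of n] a by (subst (asm) ennreal_le_iff) auto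
  qed
  have "t \<longlonglongrightarrow> r"
  proof (rule real_tendsto_sandwich[OF always_eventually always_eventually])
    have "(\<lambda>n. (r - 2 * \<epsilon> n) / (1 + \<epsilon> n)) \<longlonglongrightarrow> (r - 2 * 0) / (1 + 0)"
      by (intro tendsto_intros \<epsilon>(1)) simp
    then show "(\<lambda>n. (r - 2 * \<epsilon> n) / (1 + \<epsilon> n)) \<longlonglongrightarrow> r"
      by simp
    have "(\<lambda>n. (1 + \<epsilon> n) * r + 2 * \<epsilon> n) \<longlonglongrightarrow> (1 + 0) * r + 2 * 0"
      by (intro tendsto_intros \<epsilon>(1))
    then show "(\<lambda>n. (1 + \<epsilon> n) * r + 2 * \<epsilon> n) \<longlonglongrightarrow> r"
      by simp
  qed (use lower_t upper_t in auto)
  moreover have "s = (\<lambda>n. ennreal (t n))"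
    using s by (simp add: fun_eq_iff)
  ultimately show ?thesis
    using a by (simp add: tendsto_ennrealI)
qed

lemma kernel_loss_tendsto:
  fixes \<mu> :: "real measure" and f G :: "real \<Rightarrow> real" and Gn :: "nat \<Rightarrow> real \<Rightarrow> real"
  assumes b: "b > 0" and \<mu>: "prob_space \<mu>" "sets \<mu> = sets borel"
    and f: "(\<lambda>x. f (max x L)) \<in> borel_measurable borel"
    and G: "G \<in> borel_measurable borel" and Gn: "\<And>n. Gn n \<in> borel_measurable borel"
    and eq: "\<And>n x. L \<le> x \<Longrightarrow> Gn n x = G x"
    and close: "\<And>n x. x < L \<Longrightarrow> \<bar>Gn n x - G x\<bar> \<le> \<epsilon> n * exp ((L - x) / (4 * b))"
    and \<epsilon>: "\<epsilon> \<longlonglongrightarrow> 0" "\<And>n. 0 < \<epsilon> n" "\<And>n. \<epsilon> n \<le> 1"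
  shows "(\<lambda>n. kernel_loss \<mu> L b f (Gn n)) \<longlonglongrightarrow> kernel_loss \<mu> L b f G"
proof (rule ennreal_tendsto_of_mutual_bounds[OF \<epsilon>(1) less_imp_le[OF \<epsilon>(2)]])
  fix n
  show "kernel_loss \<mu> L b f G \<le> ennreal (1 + \<epsilon> n) * kernel_loss \<mu> L b f (Gn n) + ennreal (2 * \<epsilon> n)"
    using eq close
    by (intro kernel_loss_perturbation[OF b \<mu> f G Gn _ _ \<epsilon>(2,3)]) (auto simp: abs_minus_commute)
  show "kernel_loss \<mu> L b f (Gn n) \<le> ennreal (1 + \<epsilon> n) * kernel_loss \<mu> L b f G + ennreal (2 * \<epsilon> n)"
    using eq close by (intro kernel_loss_perturbation[OF b \<mu> f Gn G _ _ \<epsilon>(2,3)]) auto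
qed

theorem theorem14:
  fixes b L :: real
    and f f1 f2 :: "real \<Rightarrow> real"
    and \<mu> :: "real measure"
    and h h1 h2 :: "real \<Rightarrow> real"
  assumes b_pos: "b > 0"
    and f_d1: "\<And>x. x \<ge> L \<Longrightarrow> (f has_real_derivative f1 x) (at x within {L..})"
    and f_d2: "\<And>x. x \<ge> L \<Longrightarrow> (f1 has_real_derivative f2 x) (at x within {L..})"
    and f_tempered: "\<And>s. schwartz s \<Longrightarrow>
          set_integrable lborel {L..} (\<lambda>x. complex_of_real (f x) * s x)"
    and mu_prob: "prob_space \<mu>"
    and mu_sets: "sets \<mu> = sets borel"
    and mu_supp: "measure \<mu> {L..} = 1"
    and mu_int: "set_integrable \<mu> {L..} (\<lambda>q. \<bar>f q\<bar> * exp ((L - q) / b))"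
    and h_d1: "\<And>x. x \<le> L \<Longrightarrow> (h has_real_derivative h1 x) (at x within {..L})"
    and h_d2: "\<And>x. x \<le> L \<Longrightarrow> (h1 has_real_derivative h2 x) (at x within {..L})"
    and h2_cont: "continuous_on {..L} h2"
    and h_pb: "poly_bounded_on {..L} h"
    and h1_pb: "poly_bounded_on {..L} h1"
    and h2_pb: "poly_bounded_on {..L} h2"
    and h_L: "h L = f L" and h1_L: "h1 L = f1 L" and h2_L: "h2 L = f2 L"
  shows "\<exists>p :: nat \<Rightarrow> real poly.
     (\<forall>K. poly (p K) L = f L \<and> poly (pderiv (p K)) L = f1 L
           \<and> poly (pderiv (pderiv (p K))) L = f2 L) \<and>
     ((\<lambda>K. kernel_loss \<mu> L b f
              (\<lambda>x. if x \<ge> L then f x - b^2 * f2 x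
                   else poly (p K) x - b^2 * poly (pderiv (pderiv (p K))) x))
       \<longlonglongrightarrow>
      kernel_loss \<mu> L b f
              (\<lambda>x. if x \<ge> L then f x - b^2 * f2 x else h x - b^2 * h2 x))"
proof -
  define c where "c = 1 / (4 * b)"
  have c: "c > 0"
    using b_pos by (simp add: c_def)
  have h2_approx: "weighted_approximable c L h2"
    using c h2_cont h2_pb by (rule weighted_approximable_if_poly_bounded)
  have "\<exists>p. poly p L = h L \<and> poly (pderiv p) L = h1 L \<and> poly (pderiv (pderiv p)) L = h2 L \<and>
      (\<forall>x\<le>L. \<bar>(poly p x - b\<^sup>2 * poly (pderiv (pderiv p)) x) - (h x - b\<^sup>2 * h2 x)\<bar>
               \<le> 1 / Suc K * exp (c * (L - x)))" for K
    using estimator_weighted_poly_approx[OF c h_d1 h_d2 h2_approx, where \<delta> = "1 / Suc K"] by simp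
  then obtain p where p: "\<And>K. poly (p K) L = h L" "\<And>K. poly (pderiv (p K)) L = h1 L"
      "\<And>K. poly (pderiv (pderiv (p K))) L = h2 L"
    and close: "\<And>K x. x \<le> L \<Longrightarrow> \<bar>(poly (p K) x - b\<^sup>2 * poly (pderiv (pderiv (p K))) x)
                                     - (h x - b\<^sup>2 * h2 x)\<bar> \<le> 1 / Suc K * exp (c * (L - x))"
    by metis
  have f_meas: "(\<lambda>x. f (max x L)) \<in> borel_measurable borel"
    by (intro borel_measurable_continuous_on_atLeast DERIV_continuous_on) (use f_d1 in auto)
  have h_cont: "continuous_on {..L} h"
    by (rule DERIV_continuous_on) (use h_d1 in auto)
  have "(\<lambda>K. kernel_loss \<mu> L b f
              (\<lambda>x. if x \<ge> L then f x - b^2 * f2 x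
                   else poly (p K) x - b^2 * poly (pderiv (pderiv (p K))) x))
       \<longlonglongrightarrow> kernel_loss \<mu> L b f (\<lambda>x. if x \<ge> L then f x - b^2 * f2 x else h x - b^2 * h2 x)"
  proof (rule kernel_loss_tendsto[OF b_pos mu_prob mu_sets f_meas])
    show "(\<lambda>n. 1 / real (Suc n)) \<longlonglongrightarrow> 0"
      using LIMSEQ_inverse_real_of_nat by (simp add: inverse_eq_divide)
  qed (use close in \<open>auto simp: c_def intro!: borel_measurable_glued_estimator[OF f_d1 f_d2]
         continuous_intros h_cont h2_cont\<close>)
  with p h_L h1_L h2_L show ?thesis
    by auto
qed

end
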